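(* Let $n\ge 2$ be an integer and let $Q_{4n}=\langle x,y : x^{2n}=1,\ x^n=y^2,\ yx=x^{-1}y\rangle$ be the generalized quaternion group of order $4n$. Let $\Gamma_{Q_{4n}}$ be its non-commuting graph. Then the spectrum of the distance Laplacian matrix $D^L(\Gamma_{Q_{4n}})$ (eigenvalues counted with multiplicity, multiplicities being added if two of the listed values coincide) consists of: (a) $0$ with multiplicity $1$; (b) $4n-2$ and $4n$, each with multiplicity $n$; (c) $6n-4$ with multiplicity $2n-3$.
   Context: For a finite non-abelian group $G$ with centre $Z(G)$, the non-commuting graph $\Gamma_G$ is the simple undirected graph with vertex set $G\setminus Z(G)$, in which two distinct vertices $u,v$ are adjacent if and only if $uv\ne vu$. For a connected graph $H$, $d_{uv}$ denotes the length of a shortest path between $u$ and $v$; the distance matrix $D(H)$ has $(u,v)$-entry $d_{uv}$. The transmission of a vertex $v$ is $\sum_{u} d_{uv}$, and $Tr(H)$ is the diagonal matrix of vertex transmissions. The distance Laplacian matrix is $D^L(H)=Tr(H)-D(H)$. *)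

theory Defs
  imports "HOL-Algebra.Generated_Groups" "Jordan_Normal_Form.Char_Poly"
begin

definition grp_center :: "('a, 'b) monoid_scheme \<Rightarrow> 'a set" where
  "grp_center G = {z \<in> carrier G. \<forall>g \<in> carrier G. z \<otimes>\<^bsub>G\<^esub> g = g \<otimes>\<^bsub>G\<^esub> z}"

definition nc_vertices :: "('a, 'b) monoid_scheme \<Rightarrow> 'a set" where
  "nc_vertices G = carrier G - grp_center G"

definition nc_adj :: "('a, 'b) monoid_scheme \<Rightarrow> 'a \<Rightarrow> 'a \<Rightarrow> bool" where
  "nc_adj G u v \<longleftrightarrow> u \<in> nc_vertices G \<and> v \<in> nc_vertices G \<and> u \<noteq> v
      \<and> u \<otimes>\<^bsub>G\<^esub> v \<noteq> v \<otimes>\<^bsub>G\<^esub> u"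

definition nc_walk :: "('a, 'b) monoid_scheme \<Rightarrow> nat \<Rightarrow> 'a \<Rightarrow> 'a \<Rightarrow> bool" where
  "nc_walk G k u v \<longleftrightarrow> (\<exists>p :: nat \<Rightarrow> 'a. p 0 = u \<and> p k = v \<and> u \<in> nc_vertices G
      \<and> (\<forall>i < k. nc_adj G (p i) (p (Suc i))))"

(* distance d_{uv}: length of a shortest path (= shortest walk) *)
definition nc_dist :: "('a, 'b) monoid_scheme \<Rightarrow> 'a \<Rightarrow> 'a \<Rightarrow> nat" where
  "nc_dist G u v = (LEAST k. nc_walk G k u v)"

definition nc_transmission :: "('a, 'b) monoid_scheme \<Rightarrow> 'a \<Rightarrow> nat" where
  "nc_transmission G v = (\<Sum>u \<in> nc_vertices G. nc_dist G u v)"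

definition nc_dist_laplacian :: "('a, 'b) monoid_scheme \<Rightarrow> (nat \<Rightarrow> 'a) \<Rightarrow> real mat" where
  "nc_dist_laplacian G f = mat (card (nc_vertices G)) (card (nc_vertices G))
     (\<lambda>(i, j). (if i = j then real (nc_transmission G (f i)) else 0) - real (nc_dist G (f i) (f j)))"

end

theory Submission
  imports Defs
begin

(* The commuting relation is an equivalence relation on the non-central elements of Q_4n:
   its classes are the set of the 2n - 2 non-central powers of x and the n pairs
   {x^b y, x^(b+n) y}.  Two distinct commuting vertices always have a common non-commuting
   neighbour, so the non-commuting graph has diameter two and d(u, v) = 1 + [u v = v u] for
   u \<noteq> v.  Hence, with N vertices, D^L = N I - J + L, where L is the Laplacian of the disjoint
   union of cliques on the commuting classes.  As L annihilates the all-ones vector, the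
   spectrum is 0 once, N with multiplicity (number of classes - 1), and N + s with multiplicity
   s - 1 for every class of size s, as an explicit eigenbasis together with its inverse shows.
   For Q_4n we have N = 4n - 2, one class of size 2n - 2 and n classes of size 2. *)

lemma char_poly_mat_diag: "char_poly (mat_diag n g) = (\<Prod>j<n. [:- g j, 1:])"
proof -
  have "char_poly (mat_diag n g) = (\<Prod>a\<leftarrow>diag_mat (mat_diag n g). [:- a, 1:])"
    by (rule char_poly_upper_triangular[OF mat_diag_dim]) (simp add: upper_triangular_def mat_diag_def)
  also have "diag_mat (mat_diag n g) = map g [0..<n]"
    by (simp add: diag_mat_def mat_diag_def)
  finally show ?thesis
    using prod.distinct_set_conv_list[of "[0..<n]" "\<lambda>j. [:- g j, 1:]"]
    by (simp add: comp_def atLeast0LessThan)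
qed

lemma char_poly_eigenbasis:
  fixes M P Q :: "'a :: field mat"
  assumes carrier: "M \<in> carrier_mat n n" "P \<in> carrier_mat n n" "Q \<in> carrier_mat n n"
    and left_inverse: "Q * P = 1\<^sub>m n"
    and eigen: "M * P = P * mat_diag n g"
  shows "char_poly M = (\<Prod>j<n. [:- g j, 1:])"
proof -
  have right_inverse: "P * Q = 1\<^sub>m n"
    using mat_mult_left_right_inverse[OF carrier(3,2) left_inverse] .
  have "M = M * (P * Q)" using right_inverse carrier by simp
  also have "\<dots> = M * P * Q" using assoc_mult_mat[OF carrier] by simp
  also have "\<dots> = P * mat_diag n g * Q" by (simp add: eigen)
  finally have "similar_mat M (mat_diag n g)"
    using carrier left_inverse right_inverse by (intro similar_matI[of M _ P Q n]) auto
  then show ?thesis by (simp add: char_poly_similar char_poly_mat_diag)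
qed

section \<open>Spectrum of \<open>N I - J + L\<close> for a disjoint union of cliques\<close>

locale index_equiv =
  fixes N :: nat and R :: "nat \<Rightarrow> nat \<Rightarrow> bool"
  assumes N_pos: "0 < N"
    and R_refl: "R i i"
    and R_sym: "R i j \<Longrightarrow> R j i"
    and R_trans: "\<lbrakk>i < N; j < N; k < N; R i j; R j k\<rbrakk> \<Longrightarrow> R i k"
begin

definition eq_class :: "nat \<Rightarrow> nat set" where
  "eq_class i = {k. k < N \<and> R i k}"

definition class_size :: "nat \<Rightarrow> nat" where
  "class_size i = card (eq_class i)"

definition class_rep :: "nat \<Rightarrow> nat" where
  "class_rep i = (LEAST k. R i k)"

definition saturated :: "nat set \<Rightarrow> bool" where
  "saturated S \<longleftrightarrow> S \<subseteq> {..<N} \<and> (\<forall>i\<in>S. \<forall>k<N. R i k \<longrightarrow> k \<in> S)"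

lemma R_commute: "R i j \<longleftrightarrow> R j i"
  using R_sym by blast

lemma R_trans_iff: "\<lbrakk>i < N; j < N; k < N; R j k\<rbrakk> \<Longrightarrow> R i j \<longleftrightarrow> R i k"
  using R_trans R_sym by blast

lemma class_size_pos: "i < N \<Longrightarrow> 0 < class_size i"
  unfolding class_size_def eq_class_def using R_refl by (auto simp: card_gt_0_iff)

lemma R_same_class_iff: "\<lbrakk>i < N; j < N; k < N; R i j\<rbrakk> \<Longrightarrow> R i k \<longleftrightarrow> R j k"
  using R_trans[of i j k] R_trans[of j i k] R_sym[of i j] by blast

lemma class_size_eq: "\<lbrakk>i < N; j < N; R i j\<rbrakk> \<Longrightarrow> class_size i = class_size j"
  unfolding class_size_def eq_class_def using R_same_class_iff[of i j] by (intro arg_cong[where f = card]) auto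

lemma class_rep_le: "class_rep i \<le> i"
  unfolding class_rep_def using R_refl by (rule Least_le)

lemma R_class_rep: "R i (class_rep i)"
  unfolding class_rep_def using R_refl by (rule LeastI)

lemma class_rep_less: "i < N \<Longrightarrow> class_rep i < N"
  using class_rep_le[of i] by simp

lemma class_rep_eq:
  assumes "i < N" "j < N" "R i j"
  shows "class_rep i = class_rep j"
proof -
  have "R j (class_rep i)" "R i (class_rep j)"
    using assms R_class_rep class_rep_less R_trans_iff R_commute by metis+
  then show ?thesis
    unfolding class_rep_def by (simp add: Least_le order_antisym)
qed

lemma class_rep_idem: "i < N \<Longrightarrow> class_rep (class_rep i) = class_rep i"
  using class_rep_eq[of i "class_rep i"] R_class_rep class_rep_less by simp

lemma class_rep_0: "class_rep 0 = 0"
  using class_rep_le[of 0] by simp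

lemma R_reps_iff:
  assumes "i < N" "j < N" "class_rep i = i" "class_rep j = j"
  shows "R i j \<longleftrightarrow> i = j"
proof
  assume "R i j"
  then show "i = j"
    using class_rep_eq[of i j] assms by simp
qed (simp add: R_refl)

lemma index_cases:
  obtains "j = 0" | "j \<noteq> 0" "class_rep j = j" | "j \<noteq> 0" "class_rep j \<noteq> j"
  using class_rep_0 by blast

definition dot :: "(nat \<Rightarrow> real) \<Rightarrow> (nat \<Rightarrow> real) \<Rightarrow> real" where
  "dot u v = (\<Sum>k=0..<N. u k * v k)"

text \<open>A constant rather than \<open>\<lambda>_. 1\<close>, so that the simplifier does not unfold it inside
  vectors before the rules \<open>dot_simps\<close> below have expanded a dot product.\<close>

definition ones :: "nat \<Rightarrow> real" where
  "ones k = 1"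

lemma dot_diff_left: "dot (\<lambda>k. u k - v k) w = dot u w - dot v w"
  unfolding dot_def by (simp add: algebra_simps sum_subtractf)

lemma dot_diff_right: "dot w (\<lambda>k. u k - v k) = dot w u - dot w v"
  unfolding dot_def by (simp add: algebra_simps sum_subtractf)

lemma dot_scale_left: "dot (\<lambda>k. c * u k) w = c * dot u w"
  unfolding dot_def by (simp add: algebra_simps sum_distrib_left)

lemma dot_scale_right: "dot w (\<lambda>k. c * u k) = c * dot w u"
  unfolding dot_def by (simp add: algebra_simps sum_distrib_left)

lemma dot_delta_left: "a < N \<Longrightarrow> dot (\<lambda>k. of_bool (k = a)) w = w a"
  unfolding dot_def by (simp add: if_distrib sum.delta cong: if_cong)

lemma dot_delta_right: "a < N \<Longrightarrow> dot w (\<lambda>k. of_bool (k = a)) = w a"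
  unfolding dot_def by (simp add: if_distrib sum.delta cong: if_cong)

lemma class_size_eq_card: "class_size i = card ({0..<N} \<inter> {k. R i k})"
  unfolding class_size_def eq_class_def by (auto intro: arg_cong[where f = card])

lemma dot_indic_ones: "dot (\<lambda>k. of_bool (R a k)) ones = class_size a"
  unfolding dot_def ones_def by (simp add: class_size_eq_card)

lemma dot_ones_indic: "dot ones (\<lambda>k. of_bool (R a k)) = class_size a"
  using dot_indic_ones unfolding dot_def by (simp add: mult.commute)

lemma dot_ones_ones: "dot ones ones = N"
  unfolding dot_def ones_def by simp

lemma dot_indic_indic:
  assumes "a < N" "b < N"
  shows "dot (\<lambda>k. of_bool (R a k)) (\<lambda>k. of_bool (R b k)) = (if R a b then class_size a else 0)"
proof -
  have "dot (\<lambda>k. of_bool (R a k)) (\<lambda>k. of_bool (R b k))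
      = dot (\<lambda>k. of_bool (R a b) * of_bool (R a k)) ones"
    unfolding dot_def ones_def
    using R_same_class_iff[of a _ b] R_commute[of _ b] assms by (intro sum.cong) auto
  then show ?thesis
    using assms by (simp add: dot_scale_left dot_indic_ones)
qed

lemma dot_divide_left: "dot (\<lambda>k. u k / c) w = dot u w / c"
  unfolding dot_def by (simp add: sum_divide_distrib)

lemma dot_divide_right: "dot w (\<lambda>k. u k / c) = dot w u / c"
  unfolding dot_def by (simp add: sum_divide_distrib)

lemmas dot_simps = dot_diff_left dot_diff_right dot_scale_left dot_scale_right
  dot_divide_left dot_divide_right dot_delta_left dot_delta_right dot_indic_ones dot_ones_indic dot_ones_ones dot_indic_indic

text \<open>The distance Laplacian of a graph of diameter at most two on the vertices \<open>{0..<N}\<close>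
  in which two distinct vertices are non-adjacent iff they are \<open>R\<close>-related.\<close>

definition lap_row :: "nat \<Rightarrow> nat \<Rightarrow> real" where
  "lap_row k =
     (\<lambda>i. (real N + real (class_size k)) * of_bool (i = k) - ones i - of_bool (R k i))"

definition lap :: "real mat" where
  "lap = mat N N (\<lambda>(k, i). lap_row k i)"

text \<open>Column \<open>j\<close> of an eigenbasis of \<open>lap\<close>: the all-ones vector (eigenvalue \<open>0\<close>); for a
  class representative \<open>j \<noteq> 0\<close>, the combination of the indicators of the classes of \<open>j\<close> and
  of \<open>0\<close> orthogonal to the all-ones vector (eigenvalue \<open>N\<close>); for any other \<open>j\<close>, the
  difference \<open>e\<^sub>j - e\<^sub>r\<close> with its representative \<open>r\<close> (eigenvalue \<open>N\<close> plus the class size).\<close>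

definition eigvec :: "nat \<Rightarrow> nat \<Rightarrow> real" where
  "eigvec k j =
     (if j = 0 then ones k
      else if class_rep j = j
      then real (class_size 0) * of_bool (R j k) - real (class_size j) * of_bool (R 0 k)
      else of_bool (k = j) - of_bool (k = class_rep j))"

definition eigval :: "nat \<Rightarrow> real" where
  "eigval j =
     (if j = 0 then 0 else if class_rep j = j then real N else real N + real (class_size j))"

lemma dot_lap_row_eigvec:
  assumes k: "k < N" and j: "j < N"
  shows "dot (lap_row k) (\<lambda>i. eigvec i j) = eigvec k j * eigval j"
  using index_cases[of j]
proof cases
  case 1
  then show ?thesis
    using k by (simp add: lap_row_def eigvec_def eigval_def dot_simps; simp add: ones_def)
next
  case 2
  have "R k j \<Longrightarrow> class_size k = class_size j" "R k 0 \<Longrightarrow> class_size k = class_size 0"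
    using class_size_eq k j N_pos by blast+
  with 2 show ?thesis
    using k j N_pos R_commute[of j k] R_commute[of 0 k]
    by (cases "R k j"; cases "R k 0";
        simp add: lap_row_def eigvec_def eigval_def dot_simps; simp add: ones_def field_simps)
next
  case 3
  have "R k (class_rep j) \<longleftrightarrow> R k j"
    using R_class_rep[of j] class_rep_less[OF j] R_trans_iff[OF k] j by blast
  moreover have "class_size (class_rep j) = class_size j"
    using class_size_eq[of j "class_rep j"] R_class_rep class_rep_less j by simp
  ultimately show ?thesis
    using 3 k j class_rep_less[OF j]
    by (cases "k = j"; cases "k = class_rep j";
        simp add: lap_row_def eigvec_def eigval_def dot_simps; simp add: ones_def field_simps)
qed

definition dual_vec :: "nat \<Rightarrow> nat \<Rightarrow> real" where
  "dual_vec j =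
     (if j = 0 then (\<lambda>k. ones k / real N)
      else if class_rep j = j then
        (\<lambda>k. (of_bool (R j k) / real (class_size j) - ones k / real N) / real (class_size 0))
      else (\<lambda>k. of_bool (k = j) - of_bool (R j k) / real (class_size j)))"

lemma dot_dual_vec_eigvec:
  assumes j: "j < N" and i: "i < N"
  shows "dot (dual_vec j) (\<lambda>k. eigvec k i) = of_bool (j = i)"
proof -
  have pos: "0 < real N" "0 < real (class_size 0)"
    "0 < real (class_size i)" "0 < real (class_size j)"
    using N_pos class_size_pos i j by auto
  have rep_i: "class_rep i < N" "R j (class_rep i) \<longleftrightarrow> R j i"
    using class_rep_less[OF i] R_trans_iff[OF j i _ R_class_rep] by auto
  note simps = dual_vec_def eigvec_def dot_simps
  show ?thesis
    using index_cases[of j]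
  proof cases
    case 1
    with pos i rep_i show ?thesis
      by (cases rule: index_cases[of i]; simp add: simps; simp add: ones_def field_simps)
  next
    case 2
    have reps: "\<not> R j 0" "R j i \<longleftrightarrow> j = i" if "class_rep i = i"
      using 2 R_reps_iff[of j 0] R_reps_iff[of j i] class_rep_0 N_pos i j that by auto
    have "j \<noteq> i" if "class_rep i \<noteq> i"
      using 2 that by auto
    with 2 reps pos i j rep_i R_commute[of i j] R_commute[of 0 j] show ?thesis
      by (cases rule: index_cases[of i]; simp add: simps; simp add: ones_def field_simps)
  next
    case 3
    have size_eq: "class_size j = class_size i" if "R j i"
      using class_size_eq i j that by blast
    have "j \<noteq> class_rep i"
      using 3 class_rep_idem[OF i] by auto
    with 3 size_eq pos i j rep_i R_commute[of i j] R_commute[of 0 j] show ?thesis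
      by (cases rule: index_cases[of i];
          simp add: simps; cases "R j i"; cases "R j 0"; simp add: ones_def field_simps)
  qed
qed

definition eigvec_mat :: "real mat" where
  "eigvec_mat = mat N N (\<lambda>(k, j). eigvec k j)"

definition dual_mat :: "real mat" where
  "dual_mat = mat N N (\<lambda>(j, k). dual_vec j k)"

lemma dual_mat_mult_eigvec_mat: "dual_mat * eigvec_mat = 1\<^sub>m N"
  by (rule eq_matI)
     (auto simp: dual_mat_def eigvec_mat_def scalar_prod_def dot_dual_vec_eigvec[unfolded dot_def])

lemma lap_mult_eigvec_mat: "lap * eigvec_mat = eigvec_mat * mat_diag N eigval"
proof -
  have "eigvec_mat * mat_diag N eigval = mat N N (\<lambda>(k, j). eigvec k j * eigval j)"
    by (subst mat_diag_mult_right) (auto simp: eigvec_mat_def)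
  then show ?thesis
    by (auto intro!: eq_matI
        simp: lap_def eigvec_mat_def scalar_prod_def dot_lap_row_eigvec[unfolded dot_def])
qed

lemma char_poly_lap: "char_poly lap = (\<Prod>j<N. [:- eigval j, 1:])"
  by (rule char_poly_eigenbasis[OF _ _ _ dual_mat_mult_eigvec_mat lap_mult_eigvec_mat])
     (auto simp: lap_def eigvec_mat_def dual_mat_def)

definition reps :: "nat set" where
  "reps = {j. j < N \<and> class_rep j = j}"

lemma char_poly_lap_reps:
  "char_poly lap = [:0, 1:] * [:- real N, 1:] ^ (card reps - 1)
     * (\<Prod>j\<in>{..<N} - reps. [:- (real N + real (class_size j)), 1:])"
proof -
  have "0 \<in> reps" "reps \<subseteq> {..<N}"
    using N_pos class_rep_0 by (auto simp: reps_def)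
  have "(\<Prod>j<N. [:- eigval j, 1:])
      = (\<Prod>j\<in>reps. [:- eigval j, 1:]) * (\<Prod>j\<in>{..<N} - reps. [:- eigval j, 1:])"
    using prod.subset_diff[OF \<open>reps \<subseteq> {..<N}\<close>] by (simp add: mult.commute)
  also have "(\<Prod>j\<in>reps. [:- eigval j, 1:]) = [:- eigval 0, 1:] * (\<Prod>j\<in>reps - {0}. [:- eigval j, 1:])"
    using \<open>reps \<subseteq> {..<N}\<close>
    by (intro prod.remove[OF _ \<open>0 \<in> reps\<close>]) (simp add: finite_subset)
  also have "(\<Prod>j\<in>reps - {0}. [:- eigval j, 1:]) = [:- real N, 1:] ^ (card reps - 1)"
    using \<open>0 \<in> reps\<close> by (simp add: eigval_def reps_def card_Diff_singleton_if)
  also have "(\<Prod>j\<in>{..<N} - reps. [:- eigval j, 1:])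
      = (\<Prod>j\<in>{..<N} - reps. [:- (real N + real (class_size j)), 1:])"
    using class_rep_0 by (intro prod.cong) (auto simp: eigval_def reps_def intro!: gr0I)
  finally show ?thesis
    by (simp add: char_poly_lap eigval_def)
qed

lemma eq_class_eq_rep_fiber:
  assumes "r \<in> reps"
  shows "eq_class r = {j. j < N \<and> class_rep j = r}"
proof (intro equalityI subsetI)
  fix j
  assume "j \<in> eq_class r"
  then show "j \<in> {j. j < N \<and> class_rep j = r}"
    using assms class_rep_eq[of r j] unfolding eq_class_def reps_def by auto
next
  fix j
  assume "j \<in> {j. j < N \<and> class_rep j = r}"
  then show "j \<in> eq_class r"
    using R_class_rep[of j] R_sym unfolding eq_class_def by auto
qed

lemma card_saturated:
  assumes S: "saturated S" and size: "\<And>j. j \<in> S \<Longrightarrow> class_size j = a"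
  shows "card S = card (S \<inter> reps) * a"
proof -
  have "finite S"
    using S unfolding saturated_def by (auto intro: finite_subset)
  have reps_S: "class_rep ` S = S \<inter> reps"
  proof (intro equalityI subsetI)
    fix r
    assume "r \<in> class_rep ` S"
    then obtain j where j: "j \<in> S" "r = class_rep j" "j < N"
      using S unfolding saturated_def by auto
    then show "r \<in> S \<inter> reps"
      using S R_class_rep[of j] class_rep_less class_rep_idem
      unfolding saturated_def reps_def by auto
  next
    fix r
    assume "r \<in> S \<inter> reps"
    then show "r \<in> class_rep ` S"
      by (intro image_eqI[of r class_rep r]) (auto simp: reps_def)
  qed
  have fiber: "{j \<in> S. class_rep j = r} = eq_class r" if r: "r \<in> S \<inter> reps" for r
  proof -
    have "eq_class r \<subseteq> S" "S \<subseteq> {..<N}"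
      using r S unfolding saturated_def eq_class_def by auto
    then show ?thesis
      using eq_class_eq_rep_fiber[of r] r by auto
  qed
  have "card S = (\<Sum>r\<in>class_rep ` S. card {j \<in> S. class_rep j = r})"
    unfolding card_eq_sum by (rule sum.image_gen[OF \<open>finite S\<close>])
  also have "\<dots> = (\<Sum>r\<in>S \<inter> reps. class_size r)"
    unfolding reps_S class_size_def using fiber by (intro sum.cong) simp_all
  also have "\<dots> = (\<Sum>r\<in>S \<inter> reps. a)"
    using size by (intro sum.cong) simp_all
  finally show ?thesis
    by simp
qed

lemma char_poly_two_class_sizes:
  assumes sat: "saturated S1" "saturated S2"
    and partition: "S1 \<union> S2 = {..<N}" "S1 \<inter> S2 = {}"
    and size: "\<And>j. j \<in> S1 \<Longrightarrow> class_size j = a" "\<And>j. j \<in> S2 \<Longrightarrow> class_size j = b"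
    and card: "card S1 = a * p" "card S2 = b * q"
    and nonempty: "S1 \<noteq> {}" "S2 \<noteq> {}"
  shows "char_poly lap = [:0, 1:] * [:- real N, 1:] ^ (p + q - 1)
    * [:- (real N + real a), 1:] ^ (a * p - p) * [:- (real N + real b), 1:] ^ (b * q - q)"
proof -
  have fin: "finite S1" "finite S2"
    using partition by (auto intro: finite_subset)
  obtain j1 j2 where "j1 \<in> S1" "j2 \<in> S2"
    using nonempty by blast
  then have "0 < a" "0 < b"
    using size partition class_size_pos[of j1] class_size_pos[of j2] by auto
  then have reps1: "card (S1 \<inter> reps) = p" and reps2: "card (S2 \<inter> reps) = q"
    using card_saturated[OF sat(1) size(1)] card_saturated[OF sat(2) size(2)] card by simp_all
  have "reps = (S1 \<inter> reps) \<union> (S2 \<inter> reps)"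
    using partition by (auto simp: reps_def)
  also have "card \<dots> = p + q"
    using reps1 reps2 fin partition by (subst card_Un_disjoint) auto
  finally have "card reps = p + q" .
  moreover have "{..<N} - reps = (S1 - reps) \<union> (S2 - reps)"
    using partition by auto
  moreover have "card (S1 - reps) = a * p - p" "card (S2 - reps) = b * q - q"
    using reps1 reps2 card fin by (simp_all add: card_Diff_subset_Int Int_commute)
  moreover have
    "(\<Prod>j\<in>S1 - reps. [:- (real N + real (class_size j)), 1:]) = [:- (real N + real a), 1:] ^ card (S1 - reps)"
    "(\<Prod>j\<in>S2 - reps. [:- (real N + real (class_size j)), 1:]) = [:- (real N + real b), 1:] ^ card (S2 - reps)"
    using size by simp_all
  ultimately show ?thesis
    using fin partition by (simp add: char_poly_lap_reps prod.union_disjoint disjoint_iff mult.assoc)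
qed

lemma dist_laplacian_eq_lap:
  fixes d :: "nat \<Rightarrow> nat \<Rightarrow> nat"
  assumes d: "\<And>i j. \<lbrakk>i < N; j < N\<rbrakk> \<Longrightarrow> d i j = (if i = j then 0 else if R i j then 2 else 1)"
  shows "mat N N (\<lambda>(i, j). (if i = j then real (\<Sum>k=0..<N. d k i) else 0) - real (d i j)) = lap"
    (is "?D = lap")
proof (rule eq_matI)
  fix i j
  assume "i < dim_row lap" "j < dim_col lap"
  then have i: "i < N" and j: "j < N"
    by (auto simp: lap_def)
  have "real (d k i) = 1 + of_bool (R i k) - 2 * of_bool (k = i)" if "k < N" for k
    using d[OF that i] R_commute[of k i] by (simp add: R_refl)
  then have "real (\<Sum>k=0..<N. d k i) = (\<Sum>k=0..<N. 1 + of_bool (R i k) - 2 * of_bool (k = i))"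
    unfolding of_nat_sum by (intro sum.cong) auto
  also have "\<dots> = real N + real (class_size i) - 2"
    using i by (simp add: sum.distrib sum_subtractf class_size_eq_card)
  finally show "?D $$ (i, j) = lap $$ (i, j)"
    using i j d[OF i j] R_refl by (auto simp: lap_def lap_row_def ones_def)
qed (simp_all add: lap_def)

end

lemma card_bij_betw_filter:
  assumes "bij_betw f A B"
  shows "card {k \<in> A. P (f k)} = card {v \<in> B. P v}"
proof (rule bij_betw_same_card)
  show "bij_betw f {k \<in> A. P (f k)} {v \<in> B. P v}"
    using assms unfolding bij_betw_def inj_on_def by auto
qed

lemma index_equiv_pullback:
  assumes "finite V" "V \<noteq> {}" and bij: "bij_betw f {0..<card V} V"
    and "\<And>u. rel u u" "\<And>u v. rel u v \<Longrightarrow> rel v u"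
    and trans: "\<And>u v w. \<lbrakk>u \<in> V; v \<in> V; w \<in> V; rel u v; rel v w\<rbrakk> \<Longrightarrow> rel u w"
  shows "index_equiv (card V) (\<lambda>i j. rel (f i) (f j))"
proof -
  have f_V: "f i \<in> V" if "i < card V" for i
    using bij that by (auto dest: bij_betwE)
  show ?thesis
    using assms(1-2,4-5) by unfold_locales (auto simp: card_gt_0_iff intro: trans[OF f_V f_V f_V])
qed

lemma dist_laplacian_pullback:
  fixes V :: "'a set" and f :: "nat \<Rightarrow> 'a" and rel :: "'a \<Rightarrow> 'a \<Rightarrow> bool" and d :: "'a \<Rightarrow> 'a \<Rightarrow> nat"
  assumes E: "index_equiv (card V) (\<lambda>i j. rel (f i) (f j))" and bij: "bij_betw f {0..<card V} V"
    and d: "\<And>u v. \<lbrakk>u \<in> V; v \<in> V\<rbrakk> \<Longrightarrow> d u v = (if u = v then 0 else if rel u v then 2 else 1)"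
  shows "mat (card V) (card V) (\<lambda>(i, j). (if i = j then real (\<Sum>u\<in>V. d u (f i)) else 0) - real (d (f i) (f j)))
    = index_equiv.lap (card V) (\<lambda>i j. rel (f i) (f j))"
proof -
  interpret index_equiv "card V" "\<lambda>i j. rel (f i) (f j)"
    by (fact E)
  have "f i \<in> V" "f i = f j \<longleftrightarrow> i = j" if "i < card V" "j < card V" for i j
    using bij that unfolding bij_betw_def inj_on_def by auto
  then show ?thesis
    unfolding sum.reindex_bij_betw[OF bij, symmetric] using d by (intro dist_laplacian_eq_lap) simp
qed

lemma char_poly_dist_laplacian_two_class_sizes:
  fixes V :: "'a set" and f :: "nat \<Rightarrow> 'a" and rel :: "'a \<Rightarrow> 'a \<Rightarrow> bool" and d :: "'a \<Rightarrow> 'a \<Rightarrow> nat"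
  assumes fin: "finite V" and bij: "bij_betw f {0..<card V} V"
    and refl: "\<And>u. rel u u" and sym: "\<And>u v. rel u v \<Longrightarrow> rel v u"
    and trans: "\<And>u v w. \<lbrakk>u \<in> V; v \<in> V; w \<in> V; rel u v; rel v w\<rbrakk> \<Longrightarrow> rel u w"
    and d: "\<And>u v. \<lbrakk>u \<in> V; v \<in> V\<rbrakk> \<Longrightarrow> d u v = (if u = v then 0 else if rel u v then 2 else 1)"
    and partition: "A \<union> B = V" "A \<inter> B = {}"
    and sat: "\<And>u v. \<lbrakk>u \<in> A; v \<in> V; rel u v\<rbrakk> \<Longrightarrow> v \<in> A"
      "\<And>u v. \<lbrakk>u \<in> B; v \<in> V; rel u v\<rbrakk> \<Longrightarrow> v \<in> B"
    and size: "\<And>u. u \<in> A \<Longrightarrow> card {v \<in> V. rel u v} = a"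
      "\<And>u. u \<in> B \<Longrightarrow> card {v \<in> V. rel u v} = b"
    and card: "card A = a * p" "card B = b * q"
    and nonempty: "A \<noteq> {}" "B \<noteq> {}"
  shows "char_poly (mat (card V) (card V)
      (\<lambda>(i, j). (if i = j then real (\<Sum>u\<in>V. d u (f i)) else 0) - real (d (f i) (f j))))
    = [:0, 1:] * [:- real (card V), 1:] ^ (p + q - 1)
      * [:- (real (card V) + real a), 1:] ^ (a * p - p) * [:- (real (card V) + real b), 1:] ^ (b * q - q)"
proof -
  let ?N = "card V"
  have E: "index_equiv ?N (\<lambda>i j. rel (f i) (f j))"
    using nonempty partition by (intro index_equiv_pullback[OF fin _ bij refl sym trans]) auto
  interpret E: index_equiv ?N "\<lambda>i j. rel (f i) (f j)"
    by (fact E)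
  have f_V: "f i \<in> V" if "i < ?N" for i
    using bij that by (auto dest: bij_betwE)
  have card_pullback: "card {i. i < ?N \<and> P (f i)} = card {v \<in> V. P v}" for P
    using card_bij_betw_filter[OF bij, of P] by (simp add: atLeast0LessThan)
  have class_size: "E.class_size i = card {v \<in> V. rel (f i) v}" for i
    using card_pullback[of "rel (f i)"] by (simp add: E.class_size_eq_card Int_def atLeast0LessThan)
  define S1 S2 where "S1 = {i. i < ?N \<and> f i \<in> A}" and "S2 = {i. i < ?N \<and> f i \<in> B}"
  have "{v \<in> V. v \<in> A} = A" "{v \<in> V. v \<in> B} = B"
    using partition by auto
  then have "card S1 = card A" "card S2 = card B"
    using card_pullback[of "\<lambda>v. v \<in> A"] card_pullback[of "\<lambda>v. v \<in> B"]
    unfolding S1_def S2_def by simp_all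
  moreover have "card A \<noteq> 0" "card B \<noteq> 0"
    using fin partition nonempty by (auto simp: finite_subset)
  moreover have "E.saturated S1" "E.saturated S2"
    unfolding E.saturated_def S1_def S2_def by (auto intro: sat f_V)
  moreover have "S1 \<union> S2 = {..<?N}" "S1 \<inter> S2 = {}"
    using partition f_V unfolding S1_def S2_def by auto
  ultimately have "char_poly E.lap = [:0, 1:] * [:- real ?N, 1:] ^ (p + q - 1)
      * [:- (real ?N + real a), 1:] ^ (a * p - p) * [:- (real ?N + real b), 1:] ^ (b * q - q)"
    using size card by (intro E.char_poly_two_class_sizes) (auto simp: class_size S1_def S2_def)
  then show ?thesis
    by (simp only: dist_laplacian_pullback[OF E bij d])
qed

section \<open>Distances in the non-commuting graph\<close>

definition commutes :: "('a, 'b) monoid_scheme \<Rightarrow> 'a \<Rightarrow> 'a \<Rightarrow> bool" where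
  "commutes G u v \<longleftrightarrow> u \<otimes>\<^bsub>G\<^esub> v = v \<otimes>\<^bsub>G\<^esub> u"

lemma commutes_refl: "commutes G u u"
  by (simp add: commutes_def)

lemma commutes_sym: "commutes G u v \<Longrightarrow> commutes G v u"
  by (simp add: commutes_def)

lemma nc_adj_iff: "nc_adj G u v \<longleftrightarrow> u \<in> nc_vertices G \<and> v \<in> nc_vertices G \<and> \<not> commutes G u v"
  unfolding nc_adj_def commutes_def by auto

lemma nc_walk_0_iff: "nc_walk G 0 u v \<longleftrightarrow> u = v \<and> u \<in> nc_vertices G"
  unfolding nc_walk_def by auto

lemma nc_walk_Suc_0_iff: "nc_walk G (Suc 0) u v \<longleftrightarrow> nc_adj G u v"
proof
  assume "nc_walk G (Suc 0) u v"
  then show "nc_adj G u v"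
    unfolding nc_walk_def by auto
next
  assume uv: "nc_adj G u v"
  then show "nc_walk G (Suc 0) u v"
    unfolding nc_walk_def by (intro exI[of _ "\<lambda>i. if i = 0 then u else v"]) (auto simp: nc_adj_def)
qed

lemma nc_dist_self: "u \<in> nc_vertices G \<Longrightarrow> nc_dist G u u = 0"
  unfolding nc_dist_def by (simp add: nc_walk_0_iff)

lemma nc_dist_adj:
  assumes "nc_adj G u v"
  shows "nc_dist G u v = 1"
proof -
  have "\<not> nc_walk G 0 u v"
    using assms by (auto simp: nc_walk_0_iff nc_adj_def)
  then have "1 \<le> k" if "nc_walk G k u v" for k
    using that by (cases k) auto
  then show ?thesis
    unfolding nc_dist_def using assms by (intro Least_equality) (auto simp: nc_walk_Suc_0_iff)
qed

lemma nc_dist_common_neighbour: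
  assumes "u \<noteq> v" "\<not> nc_adj G u v" "nc_adj G u w" "nc_adj G w v"
  shows "nc_dist G u v = 2"
proof -
  have "nc_walk G 2 u v"
    unfolding nc_walk_def using assms
    by (intro exI[of _ "\<lambda>i. if i = 0 then u else if i = 1 then w else v"])
       (auto simp: less_2_cases_iff nc_adj_def)
  moreover have "\<not> nc_walk G 0 u v" "\<not> nc_walk G (Suc 0) u v"
    using assms by (auto simp: nc_walk_0_iff nc_walk_Suc_0_iff)
  then have "2 \<le> k" if "nc_walk G k u v" for k
    using that by (cases k; cases "k - 1") auto
  ultimately show ?thesis
    unfolding nc_dist_def by (intro Least_equality) auto
qed

section \<open>The generalized quaternion group\<close>

locale generalized_quaternion = group G for G (structure) +
  fixes x y :: 'a and n :: nat
  assumes n_ge_2: "n \<ge> 2"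
    and x_carrier: "x \<in> carrier G" and y_carrier: "y \<in> carrier G"
    and x_pow_2n: "x [^] (2 * n) = \<one>"
    and x_pow_n: "x [^] n = y [^] (2::nat)"
    and y_mult_x: "y \<otimes> x = inv x \<otimes> y"
    and generated: "carrier G = generate G {x, y}"
    and card_carrier: "card (carrier G) = 4 * n"
begin

definition X :: "int \<Rightarrow> 'a" where
  "X a = x [^] a"

definition Y :: "int \<Rightarrow> 'a" where
  "Y a = X a \<otimes> y"

lemma X_carrier [simp]: "X a \<in> carrier G"
  unfolding X_def using x_carrier by simp

lemma Y_carrier [simp]: "Y a \<in> carrier G"
  unfolding Y_def using y_carrier by simp

lemma X_mult_X: "X a \<otimes> X b = X (a + b)"
  unfolding X_def using x_carrier by (simp add: int_pow_mult)

lemma X_0 [simp]: "X 0 = \<one>"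
  unfolding X_def by simp

lemma X_mod: "X a = X (a mod (2 * int n))"
proof -
  have "X (2 * int n) = \<one>"
    unfolding X_def using x_pow_2n int_pow_int[of G x "2 * n"] by simp
  then have "X (2 * int n * q) = \<one>" for q
    unfolding X_def using int_pow_pow x_carrier by (metis int_pow_one)
  moreover have "X a = X (2 * int n * (a div (2 * int n))) \<otimes> X (a mod (2 * int n))"
    unfolding X_mult_X by simp
  ultimately show ?thesis
    by simp
qed

lemma Y_mod: "Y a = Y (a mod (2 * int n))"
  unfolding Y_def using X_mod by metis

lemma y_mult_x_pow: "y \<otimes> x [^] (k::nat) = inv x [^] k \<otimes> y"
proof (induction k)
  case 0
  then show ?case
    using y_carrier by simp
next
  case (Suc k)
  have "y \<otimes> x [^] Suc k = (y \<otimes> x [^] k) \<otimes> x"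
    using x_carrier y_carrier by (simp add: m_assoc)
  also have "\<dots> = inv x [^] k \<otimes> (y \<otimes> x)"
    using Suc x_carrier y_carrier by (simp add: m_assoc)
  also have "\<dots> = inv x [^] Suc k \<otimes> y"
    using y_mult_x x_carrier y_carrier by (simp add: m_assoc)
  finally show ?case .
qed

lemma y_mult_X: "y \<otimes> X a = X (- a) \<otimes> y"
proof -
  have nat_case: "y \<otimes> X (int k) = X (- int k) \<otimes> y" for k
    unfolding X_def using y_mult_x_pow[of k] x_carrier by (simp add: int_pow_int int_pow_neg_int nat_pow_inv)
  show ?thesis
  proof (cases "a \<ge> 0")
    case True
    then show ?thesis
      using nat_case[of "nat a"] by simp
  next
    case False
    have "y \<otimes> X a = X (- a) \<otimes> (X a \<otimes> y) \<otimes> X a"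
      using y_carrier by (simp add: m_assoc[symmetric] X_mult_X)
    also have "X a \<otimes> y = y \<otimes> X (- a)"
      using False nat_case[of "nat (- a)"] by simp
    also have "X (- a) \<otimes> (y \<otimes> X (- a)) \<otimes> X a = X (- a) \<otimes> y"
      using y_carrier by (simp add: m_assoc X_mult_X)
    finally show ?thesis .
  qed
qed

lemma y_mult_y: "y \<otimes> y = X (int n)"
  unfolding X_def using x_pow_n y_carrier x_carrier by (simp add: int_pow_int numeral_2_eq_2)

lemma X_mult_Y: "X a \<otimes> Y b = Y (a + b)"
  unfolding Y_def using y_carrier by (simp add: X_mult_X m_assoc[symmetric])

lemma Y_mult_X: "Y a \<otimes> X b = Y (a - b)"
  unfolding Y_def using y_carrier by (simp add: m_assoc y_mult_X) (simp add: m_assoc[symmetric] X_mult_X)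

lemma Y_mult_Y: "Y a \<otimes> Y b = X (a - b + int n)"
proof -
  have "Y a \<otimes> Y b = (Y a \<otimes> X b) \<otimes> y"
    unfolding Y_def using y_carrier by (simp add: m_assoc)
  also have "\<dots> = X (a - b) \<otimes> (y \<otimes> y)"
    unfolding Y_mult_X unfolding Y_def using y_carrier by (simp add: m_assoc)
  finally show ?thesis
    by (simp add: y_mult_y X_mult_X)
qed

lemma generate_subset: "generate G {x, y} \<subseteq> range X \<union> range Y"
proof
  fix g
  assume "g \<in> generate G {x, y}"
  then show "g \<in> range X \<union> range Y"
  proof (induction rule: generate.induct)
    case one
    have "\<one> = X 0"
      by simp
    then show ?case
      by blast
  next
    case (incl h)
    have "x = X 1" "y = Y 0"
      unfolding Y_def X_def using x_carrier y_carrier by simp_all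
    then show ?case
      using incl by auto
  next
    case (inv h)
    have "inv x = X (- 1)"
      unfolding X_def using x_carrier by (simp add: int_pow_neg)
    moreover have "inv y = Y (int n)"
      using y_carrier X_mult_X[of "int n" "int n"] X_mod[of "2 * int n"]
      by (intro inv_equality) (simp_all add: Y_def m_assoc y_mult_y)
    ultimately show ?case
      using inv by auto
  next
    case (eng h1 h2)
    then show ?case
      by (auto simp: X_mult_X X_mult_Y Y_mult_X Y_mult_Y)
  qed
qed

abbreviation residues :: "int set" where
  "residues \<equiv> {0..<2 * int n}"

lemma carrier_eq: "carrier G = X ` residues \<union> Y ` residues"
proof
  show "carrier G \<subseteq> X ` residues \<union> Y ` residues"
  proof
    fix g
    assume "g \<in> carrier G"
    then obtain a where "g = X a \<or> g = Y a"
      using generated generate_subset by blast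
    moreover have "X a \<in> X ` residues" "Y a \<in> Y ` residues"
      using X_mod[of a] Y_mod[of a] n_ge_2 by auto
    ultimately show "g \<in> X ` residues \<union> Y ` residues"
      by blast
  qed
qed auto

text \<open>The \<open>4 n\<close> words \<open>x\<^sup>a\<close> and \<open>x\<^sup>a y\<close> with \<open>0 \<le> a < 2 n\<close> cover a group of
  order \<open>4 n\<close>, so they are pairwise distinct.\<close>

lemma normal_forms_distinct:
  "inj_on X residues" "inj_on Y residues" "X ` residues \<inter> Y ` residues = {}"
proof -
  have "card (X ` residues) \<le> 2 * n" "card (Y ` residues) \<le> 2 * n"
    using card_image_le[of residues X] card_image_le[of residues Y] by simp_all
  moreover have "card (X ` residues) + card (Y ` residues) = 4 * n + card (X ` residues \<inter> Y ` residues)"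
    using card_Un_Int[of "X ` residues" "Y ` residues"] card_carrier carrier_eq by simp
  ultimately have "card (X ` residues) = 2 * n" "card (Y ` residues) = 2 * n"
    "card (X ` residues \<inter> Y ` residues) = 0"
    by linarith+
  then show "inj_on X residues" "inj_on Y residues" "X ` residues \<inter> Y ` residues = {}"
    by (simp_all add: inj_on_iff_eq_card)
qed

lemma carrier_cases:
  assumes "g \<in> carrier G"
  obtains a where "g = X a" | b where "g = Y b"
  using assms carrier_eq by blast

lemma X_eq_iff: "X a = X b \<longleftrightarrow> a mod (2 * int n) = b mod (2 * int n)"
proof
  assume "X a = X b"
  then have "X (a mod (2 * int n)) = X (b mod (2 * int n))"
    using X_mod[of a] X_mod[of b] by simp
  then show "a mod (2 * int n) = b mod (2 * int n)"
    using inj_onD[OF normal_forms_distinct(1)] n_ge_2 by simp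
qed (metis X_mod)

lemma Y_eq_iff: "Y a = Y b \<longleftrightarrow> a mod (2 * int n) = b mod (2 * int n)"
proof
  assume "Y a = Y b"
  then have "Y (a mod (2 * int n)) = Y (b mod (2 * int n))"
    using Y_mod[of a] Y_mod[of b] by simp
  then show "a mod (2 * int n) = b mod (2 * int n)"
    using inj_onD[OF normal_forms_distinct(2)] n_ge_2 by simp
qed (metis Y_mod)

lemma X_neq_Y: "X a \<noteq> Y b"
proof -
  have "X (a mod (2 * int n)) \<in> X ` residues" "Y (b mod (2 * int n)) \<in> Y ` residues"
    using n_ge_2 by auto
  then have "X (a mod (2 * int n)) \<noteq> Y (b mod (2 * int n))"
    using normal_forms_distinct(3) by (metis disjoint_iff)
  then show ?thesis
    using X_mod[of a] Y_mod[of b] by simp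
qed

lemma commutes_X_X: "commutes G (X a) (X b)"
  by (simp add: commutes_def X_mult_X add.commute)

lemma commutes_X_Y: "commutes G (X a) (Y b) \<longleftrightarrow> int n dvd a"
proof -
  have "commutes G (X a) (Y b) \<longleftrightarrow> 2 * int n dvd (a + b) - (b - a)"
    by (simp add: commutes_def X_mult_Y Y_mult_X Y_eq_iff mod_eq_dvd_iff)
  also have "(a + b) - (b - a) = 2 * a"
    by simp
  finally show ?thesis
    by simp
qed

lemma commutes_Y_X: "commutes G (Y b) (X a) \<longleftrightarrow> int n dvd a"
  using commutes_X_Y commutes_sym by metis

lemma commutes_Y_Y: "commutes G (Y a) (Y b) \<longleftrightarrow> int n dvd a - b"
proof -
  have "commutes G (Y a) (Y b) \<longleftrightarrow> 2 * int n dvd (a - b + int n) - (b - a + int n)"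
    by (simp add: commutes_def Y_mult_Y X_eq_iff mod_eq_dvd_iff)
  also have "(a - b + int n) - (b - a + int n) = 2 * (a - b)"
    by simp
  finally show ?thesis
    by (simp only: dvd_times_left_cancel_iff)
qed

lemma X_in_center_iff: "X a \<in> grp_center G \<longleftrightarrow> int n dvd a"
proof
  assume "X a \<in> grp_center G"
  then have "commutes G (X a) (Y 0)"
    unfolding grp_center_def commutes_def by auto
  then show "int n dvd a"
    by (simp add: commutes_X_Y)
next
  assume "int n dvd a"
  have "commutes G (X a) g" if "g \<in> carrier G" for g
    using that by (cases rule: carrier_cases) (simp_all add: \<open>int n dvd a\<close> commutes_X_X commutes_X_Y)
  then show "X a \<in> grp_center G"
    unfolding grp_center_def commutes_def by simp
qed

lemma Y_notin_center: "Y b \<notin> grp_center G"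
proof
  assume "Y b \<in> grp_center G"
  then have "commutes G (X 1) (Y b)"
    unfolding grp_center_def commutes_def by auto
  then show False
    using n_ge_2 by (simp add: commutes_X_Y)
qed

definition cyclic_verts :: "'a set" where
  "cyclic_verts = {X a |a. \<not> int n dvd a}"

lemma nc_vertices_eq: "nc_vertices G = cyclic_verts \<union> range Y"
proof (intro equalityI subsetI)
  fix u
  assume "u \<in> nc_vertices G"
  then have "u \<in> carrier G" "u \<notin> grp_center G"
    by (auto simp: nc_vertices_def)
  then show "u \<in> cyclic_verts \<union> range Y"
    by (cases rule: carrier_cases) (auto simp: cyclic_verts_def X_in_center_iff)
next
  fix u
  assume "u \<in> cyclic_verts \<union> range Y"
  then show "u \<in> nc_vertices G"
    by (auto simp: cyclic_verts_def nc_vertices_def X_in_center_iff Y_notin_center)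
qed

lemma cyclic_verts_disjoint: "cyclic_verts \<inter> range Y = {}"
  unfolding cyclic_verts_def using X_neq_Y[THEN not_sym] by auto

lemma nc_vertex_cases:
  assumes "u \<in> nc_vertices G"
  obtains a where "u = X a" "\<not> int n dvd a" | b where "u = Y b"
  using assms unfolding nc_vertices_eq cyclic_verts_def by blast

lemma commutes_trans:
  assumes "u \<in> nc_vertices G" "v \<in> nc_vertices G" "w \<in> nc_vertices G"
    and "commutes G u v" "commutes G v w"
  shows "commutes G u w"
  using assms(1-3)
proof (cases rule: nc_vertex_cases[case_product nc_vertex_cases nc_vertex_cases])
  case ("2_2_2" a b c)
  then have "int n dvd (a - b) + (b - c)"
    using assms(4,5) by (intro dvd_add) (simp_all add: commutes_Y_Y)
  then show ?thesis
    using "2_2_2" by (simp add: commutes_Y_Y)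
qed (use assms(4,5) in \<open>auto simp: commutes_X_X commutes_X_Y commutes_Y_X\<close>)

lemma X_in_nc_vertices_iff: "X a \<in> nc_vertices G \<longleftrightarrow> \<not> int n dvd a"
  by (simp add: nc_vertices_def X_in_center_iff)

lemma Y_in_nc_vertices: "Y b \<in> nc_vertices G"
  by (simp add: nc_vertices_def Y_notin_center)

lemma common_neighbour:
  assumes "u \<in> nc_vertices G" "v \<in> nc_vertices G" "commutes G u v"
  obtains w where "nc_adj G u w" "nc_adj G w v"
  using assms(1)
proof (cases rule: nc_vertex_cases)
  case (1 a)
  from assms(2) obtain c where "v = X c" "\<not> int n dvd c"
    by (cases rule: nc_vertex_cases) (use 1 assms(3) in \<open>auto simp: commutes_X_Y\<close>)
  with 1 show ?thesis
    by (intro that[of "Y 0"])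
       (auto simp: nc_adj_iff X_in_nc_vertices_iff Y_in_nc_vertices commutes_X_Y commutes_Y_X)
next
  case (2 b)
  from assms(2) obtain d where "v = Y d"
    by (cases rule: nc_vertex_cases) (use 2 assms(3) in \<open>auto simp: commutes_Y_X\<close>)
  moreover have "\<not> int n dvd 1"
    using n_ge_2 by simp
  ultimately show ?thesis
    using 2 by (intro that[of "X 1"])
      (auto simp: nc_adj_iff X_in_nc_vertices_iff Y_in_nc_vertices commutes_X_Y commutes_Y_X)
qed

lemma nc_dist_eq:
  assumes "u \<in> nc_vertices G" "v \<in> nc_vertices G"
  shows "nc_dist G u v = (if u = v then 0 else if commutes G u v then 2 else 1)"
proof -
  have "nc_dist G u v = 2" if ne: "u \<noteq> v" and comm: "commutes G u v"
  proof -
    obtain w where "nc_adj G u w" "nc_adj G w v"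
      using common_neighbour assms comm by blast
    moreover have "\<not> nc_adj G u v"
      using comm by (simp add: nc_adj_iff)
    ultimately show ?thesis
      using ne by (intro nc_dist_common_neighbour[where w = w])
  qed
  then show ?thesis
    using assms by (auto simp: nc_dist_self nc_dist_adj nc_adj_iff)
qed

lemma card_range_Y: "card (range Y) = 2 * n"
proof -
  have "Y b \<in> Y ` residues" for b
    using n_ge_2 by (intro image_eqI[where x = "b mod (2 * int n)"]) (simp_all flip: Y_mod)
  then have "range Y = Y ` residues"
    by auto
  then show ?thesis
    using card_image[OF normal_forms_distinct(2)] by simp
qed

lemma card_cyclic_verts: "card cyclic_verts = 2 * n - 2"
proof -
  have multiples: "{a \<in> residues. int n dvd a} = {0, int n}"
  proof (intro equalityI subsetI)
    fix a
    assume a: "a \<in> {a \<in> residues. int n dvd a}"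
    then obtain k where k: "a = int n * k"
      by blast
    have "0 < int n"
      using n_ge_2 by simp
    then have "0 \<le> k" "k < 2"
      using a k by (auto simp: zero_le_mult_iff)
    then have "k = 0 \<or> k = 1"
      by auto
    then show "a \<in> {0, int n}"
      using k by auto
  qed (use n_ge_2 in auto)
  have "cyclic_verts = X ` (residues - {0, int n})"
  proof (intro equalityI subsetI)
    fix u
    assume "u \<in> cyclic_verts"
    then obtain a where "u = X a" "\<not> int n dvd a"
      unfolding cyclic_verts_def by blast
    moreover have "a mod (2 * int n) \<in> residues" "\<not> int n dvd a mod (2 * int n)"
      using n_ge_2 \<open>\<not> int n dvd a\<close> by (auto simp: dvd_mod_iff)
    ultimately show "u \<in> X ` (residues - {0, int n})"
      using X_mod[of a] multiples by blast
  next
    fix u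
    assume "u \<in> X ` (residues - {0, int n})"
    then show "u \<in> cyclic_verts"
      using multiples unfolding cyclic_verts_def by blast
  qed
  moreover have "card (residues - {0, int n}) = 2 * n - 2"
    using n_ge_2 by (subst card_Diff_subset) auto
  ultimately show ?thesis
    using card_image[OF inj_on_subset[OF normal_forms_distinct(1)]] by simp
qed

lemma commuting_class_cyclic:
  assumes "u \<in> cyclic_verts"
  shows "{v \<in> nc_vertices G. commutes G u v} = cyclic_verts"
  using assms unfolding nc_vertices_eq cyclic_verts_def
  by (auto simp: commutes_X_X commutes_X_Y)

lemma commuting_class_Y: "{v \<in> nc_vertices G. commutes G (Y b) v} = {Y b, Y (b + int n)}"
proof (intro equalityI subsetI)
  fix v
  assume "v \<in> {v \<in> nc_vertices G. commutes G (Y b) v}"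
  then have v: "v \<in> nc_vertices G" and comm: "commutes G (Y b) v"
    by auto
  from v obtain c where c: "v = Y c" "int n dvd b - c"
    by (cases rule: nc_vertex_cases) (use comm in \<open>auto simp: commutes_Y_X commutes_Y_Y\<close>)
  then obtain k where k: "c = b + int n * k"
    by (metis add_diff_cancel_left' diff_diff_eq2 dvd_def minus_diff_eq dvd_minus_iff)
  show "v \<in> {Y b, Y (b + int n)}"
  proof (cases "even k")
    case True
    then obtain m where "k = 2 * m"
      by (auto elim: evenE)
    then have "c - b = 2 * int n * m"
      using k by simp
    then have "Y c = Y b"
      by (simp add: Y_eq_iff mod_eq_dvd_iff)
    then show ?thesis
      using c by simp
  next
    case False
    then obtain m where "k = 2 * m + 1"
      by (auto elim: oddE)
    then have "c - (b + int n) = 2 * int n * m"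
      using k by (simp add: algebra_simps)
    then have "Y c = Y (b + int n)"
      by (simp add: Y_eq_iff mod_eq_dvd_iff)
    then show ?thesis
      using c by simp
  qed
qed (auto simp: Y_in_nc_vertices commutes_Y_Y commutes_refl)

lemma card_commuting_class_Y: "card {v \<in> nc_vertices G. commutes G (Y b) v} = 2"
proof -
  have "\<not> 2 * int n dvd int n"
    using n_ge_2 by (auto dest: zdvd_imp_le)
  then have "Y b \<noteq> Y (b + int n)"
    by (simp add: Y_eq_iff mod_eq_dvd_iff)
  then show ?thesis
    by (simp add: commuting_class_Y)
qed

lemma card_nc_vertices: "card (nc_vertices G) = 4 * n - 2"
proof -
  have "finite (carrier G)"
    using card_carrier n_ge_2 by (intro card_ge_0_finite) simp
  then have "finite cyclic_verts" "finite (range Y)"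
    using nc_vertices_eq unfolding nc_vertices_def by (auto intro: finite_subset)
  then show ?thesis
    using card_Un_disjoint[OF _ _ cyclic_verts_disjoint] card_cyclic_verts card_range_Y n_ge_2
    by (simp add: nc_vertices_eq)
qed

lemma char_poly_nc_dist_laplacian:
  assumes bij: "bij_betw f {0..<card (nc_vertices G)} (nc_vertices G)"
  shows "char_poly (nc_dist_laplacian G f) = [:0, 1:] * [:- (4 * real n - 2), 1:] ^ n
    * [:- (4 * real n), 1:] ^ n * [:- (6 * real n - 4), 1:] ^ (2 * n - 3)"
proof -
  let ?V = "nc_vertices G"
  have "finite ?V"
    using card_nc_vertices n_ge_2 by (intro card_ge_0_finite) simp
  have sat_cyclic: "v \<in> cyclic_verts" if "u \<in> cyclic_verts" "v \<in> ?V" "commutes G u v" for u v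
    using that commuting_class_cyclic by blast
  have sat_Y: "v \<in> range Y" if "u \<in> range Y" "v \<in> ?V" "commutes G u v" for u v
    using that commuting_class_Y by blast
  have size_cyclic: "card {v \<in> ?V. commutes G u v} = 2 * n - 2" if "u \<in> cyclic_verts" for u
    using that commuting_class_cyclic card_cyclic_verts by simp
  have size_Y: "card {v \<in> ?V. commutes G u v} = 2" if "u \<in> range Y" for u
    using that card_commuting_class_Y by blast
  have "char_poly (nc_dist_laplacian G f) = [:0, 1:] * [:- real (card ?V), 1:] ^ (1 + n - 1)
      * [:- (real (card ?V) + real (2 * n - 2)), 1:] ^ ((2 * n - 2) * 1 - 1)
      * [:- (real (card ?V) + real (2::nat)), 1:] ^ (2 * n - n)"
    unfolding nc_dist_laplacian_def nc_transmission_def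
    by (rule char_poly_dist_laplacian_two_class_sizes[OF \<open>finite ?V\<close> bij commutes_refl commutes_sym
          commutes_trans nc_dist_eq nc_vertices_eq[symmetric] cyclic_verts_disjoint
          sat_cyclic sat_Y size_cyclic size_Y])
       (use card_cyclic_verts card_range_Y n_ge_2 in auto)
  also have "\<dots> = [:0, 1:] * [:- (4 * real n - 2), 1:] ^ n
      * [:- (4 * real n), 1:] ^ n * [:- (6 * real n - 4), 1:] ^ (2 * n - 3)"
    using n_ge_2 by (simp add: card_nc_vertices of_nat_diff mult_ac)
  finally show ?thesis .
qed

end

theorem theorem3p2:
  fixes G :: "('a, 'b) monoid_scheme" and x y :: 'a and n :: nat and f :: "nat \<Rightarrow> 'a"
  assumes "group G"
    and "n \<ge> 2"
    and "x \<in> carrier G" and "y \<in> carrier G"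
    and "x [^]\<^bsub>G\<^esub> (2 * n) = \<one>\<^bsub>G\<^esub>"
    and "x [^]\<^bsub>G\<^esub> n = y [^]\<^bsub>G\<^esub> (2::nat)"
    and "y \<otimes>\<^bsub>G\<^esub> x = inv\<^bsub>G\<^esub> x \<otimes>\<^bsub>G\<^esub> y"
    and "carrier G = generate G {x, y}"
    and "finite (carrier G)" and "card (carrier G) = 4 * n"
    and "bij_betw f {0..<card (nc_vertices G)} (nc_vertices G)"
  shows "char_poly (nc_dist_laplacian G f) =
           [:0, 1:]
         * [:- (4 * real n - 2), 1:] ^ n
         * [:- (4 * real n), 1:] ^ n
         * [:- (6 * real n - 4), 1:] ^ (2 * n - 3)"
proof -
  interpret generalized_quaternion G x y n
    using assms unfolding generalized_quaternion_def generalized_quaternion_axioms_def by blast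
  show ?thesis
    using char_poly_nc_dist_laplacian assms(11) .
qed

end
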